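(* Define $\tau_{k} = \{T \mid T \subseteq \Omega, |T| = k \in \mathbb{N} \}$ and let $\mathcal{B}_m$ denote any set of binary strings, such that the strings are of length $m$ or less. Let \[ R = \{(T, F) \mid T \in \tau_{k}, F \in \mathcal{B}_m \}, \quad R_{q_{\text{min}}} = \{(T, F) \mid T \in \tau_{k}, F \in \mathcal{B}_m, \phi(T,F) \geq q_{\text{min}} \}, \] where $\phi(T,F)$ is the decomposable probability-of-success metric for algorithm $\mathcal{A}$ on problem $(\Omega, T, F)$. Then for any $m \in \mathbb{N}$, \[ \frac{|R_{q_{\text{min}}}|}{|R|} \leq \frac{p}{q_{\text{min}}}, \] where $p = k/|\Omega|$.
   Context: Algorithmic search framework: finite discrete search space $\Omega$, target sets $T\subseteq\Omega$ with indicator vectors $\mathbf{t}$, information resources $F$ (here binary strings), and a fixed search algorithm $\mathcal{A}$. A probability-of-success metric $\phi$ is decomposable if there exists a probability vector $\mathbf{P}_{\phi,f}$ over $\Omega$, not a function of the target, with $\phi(t,f)=\mathbf{t}^{\top}\mathbf{P}_{\phi,f}=P_\phi(X\in t\mid f)$. $q_{\text{min}}\in(0,1]$ is a success threshold. *)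

theory Defs
  imports Complex_Main
begin

definition tau :: "'a set \<Rightarrow> nat \<Rightarrow> 'a set set" where
  "tau \<Omega> k = {T. T \<subseteq> \<Omega> \<and> card T = k}"

definition decomposable ::
  "'a set \<Rightarrow> ('a set \<Rightarrow> bool list \<Rightarrow> real) \<Rightarrow> bool" where
  "decomposable \<Omega> \<phi> \<longleftrightarrow>
     (\<exists>P :: bool list \<Rightarrow> 'a \<Rightarrow> real.
        (\<forall>f. \<forall>x\<in>\<Omega>. 0 \<le> P f x) \<and>
        (\<forall>f. (\<Sum>x\<in>\<Omega>. P f x) = 1) \<and>
        (\<forall>f T. T \<subseteq> \<Omega> \<longrightarrow> \<phi> T f = (\<Sum>x\<in>T. P f x)))"

end

theory Submission
  imports Defs
begin

text \<open>For a fixed information resource F the decomposable metric is a probability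
  mass P, and every element of \<Omega> lies in the same fraction k / |\<Omega>| of the k-element
  targets, so the average of \<phi>(T, F) over all targets T is exactly k / |\<Omega>|.
  Markov's inequality then bounds the fraction of targets with \<phi>(T, F) \<ge> q by
  (k / |\<Omega>|) / q, and summing over the resources F gives the bound on pairs.\<close>

lemma finite_tau: "finite \<Omega> \<Longrightarrow> finite (tau \<Omega> k)"
  unfolding tau_def by (rule finite_subset[of _ "Pow \<Omega>"]) auto

lemma card_tau: "finite \<Omega> \<Longrightarrow> card (tau \<Omega> k) = card \<Omega> choose k"
  unfolding tau_def by (rule n_subsets)

lemma card_tau_containing:
  assumes fin: "finite \<Omega>" and x: "x \<in> \<Omega>"
  shows "card {T \<in> tau \<Omega> (Suc j). x \<in> T} = (card \<Omega> - 1) choose j"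
proof -
  have "bij_betw (insert x) (tau (\<Omega> - {x}) j) {T \<in> tau \<Omega> (Suc j). x \<in> T}"
  proof (rule bij_betw_byWitness[where f' = "\<lambda>T. T - {x}"])
    show "insert x ` tau (\<Omega> - {x}) j \<subseteq> {T \<in> tau \<Omega> (Suc j). x \<in> T}"
    proof
      fix T assume "T \<in> insert x ` tau (\<Omega> - {x}) j"
      then obtain S where S: "S \<subseteq> \<Omega> - {x}" "card S = j" "T = insert x S"
        by (auto simp: tau_def)
      moreover from S(1) fin have "finite S" by (meson finite_Diff finite_subset)
      ultimately show "T \<in> {T \<in> tau \<Omega> (Suc j). x \<in> T}"
        using x by (auto simp: tau_def card_insert_if)
    qed
    show "(\<lambda>T. T - {x}) ` {T \<in> tau \<Omega> (Suc j). x \<in> T} \<subseteq> tau (\<Omega> - {x}) j"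
      using fin by (auto simp: tau_def dest: finite_subset)
  qed (auto simp: tau_def)
  then have "card {T \<in> tau \<Omega> (Suc j). x \<in> T} = card (tau (\<Omega> - {x}) j)"
    by (simp add: bij_betw_same_card)
  with fin x show ?thesis by (simp add: card_tau)
qed

lemma sum_tau_sum:
  fixes w :: "'a \<Rightarrow> real"
  assumes fin: "finite \<Omega>"
  shows "real (card \<Omega>) * (\<Sum>T\<in>tau \<Omega> k. \<Sum>x\<in>T. w x)
           = real k * real (card (tau \<Omega> k)) * (\<Sum>x\<in>\<Omega>. w x)"
proof (cases k)
  case 0
  have "(\<Sum>x\<in>T. w x) = 0" if "T \<in> tau \<Omega> 0" for T
    using that finite_subset[OF _ fin] by (auto simp: tau_def)
  with 0 show ?thesis by simp
next
  case (Suc j)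
  have "(\<Sum>T\<in>tau \<Omega> k. \<Sum>x\<in>T. w x) = (\<Sum>T\<in>tau \<Omega> k. \<Sum>x\<in>{x \<in> \<Omega>. x \<in> T}. w x)"
    by (intro sum.cong[OF refl] arg_cong[where f = "sum w"]) (auto simp: tau_def)
  also have "\<dots> = (\<Sum>x\<in>\<Omega>. \<Sum>T\<in>{T \<in> tau \<Omega> k. x \<in> T}. w x)"
    using fin by (simp add: sum.swap_restrict finite_tau)
  also have "\<dots> = real ((card \<Omega> - 1) choose j) * (\<Sum>x\<in>\<Omega>. w x)"
    using fin by (simp add: Suc card_tau_containing sum_distrib_left)
  finally have "real (card \<Omega>) * (\<Sum>T\<in>tau \<Omega> k. \<Sum>x\<in>T. w x)
      = real (card \<Omega> * ((card \<Omega> - 1) choose j)) * (\<Sum>x\<in>\<Omega>. w x)"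
    by simp
  also have "card \<Omega> * ((card \<Omega> - 1) choose j) = k * card (tau \<Omega> k)"
    using times_binomial_minus1_eq[of k "card \<Omega>"] fin by (simp add: Suc card_tau)
  finally show ?thesis by simp
qed

lemma decomposable_nonneg:
  assumes "decomposable \<Omega> \<phi>" and "T \<subseteq> \<Omega>"
  shows "0 \<le> \<phi> T F"
proof -
  obtain P where nonneg: "\<forall>f. \<forall>x\<in>\<Omega>. 0 \<le> P f x"
    and mass: "\<forall>f T. T \<subseteq> \<Omega> \<longrightarrow> \<phi> T f = (\<Sum>x\<in>T. P f x)"
    using assms(1) unfolding decomposable_def by blast
  have "\<phi> T F = (\<Sum>x\<in>T. P F x)" using mass assms(2) by blast
  also have "\<dots> \<ge> 0" using nonneg assms(2) by (auto intro: sum_nonneg)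
  finally show ?thesis .
qed

lemma decomposable_sum_tau:
  assumes dec: "decomposable \<Omega> \<phi>" and fin: "finite \<Omega>"
  shows "real (card \<Omega>) * (\<Sum>T\<in>tau \<Omega> k. \<phi> T F) = real k * real (card (tau \<Omega> k))"
proof -
  obtain P where total: "\<forall>f. (\<Sum>x\<in>\<Omega>. P f x) = 1"
    and mass: "\<forall>f T. T \<subseteq> \<Omega> \<longrightarrow> \<phi> T f = (\<Sum>x\<in>T. P f x)"
    using dec unfolding decomposable_def by blast
  have "(\<Sum>T\<in>tau \<Omega> k. \<phi> T F) = (\<Sum>T\<in>tau \<Omega> k. \<Sum>x\<in>T. P F x)"
    using mass by (intro sum.cong) (auto simp: tau_def)
  with sum_tau_sum[OF fin, where k = k and w = "P F"] total show ?thesis by simp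
qed

lemma card_threshold_le_sum:
  fixes f :: "'b \<Rightarrow> real"
  assumes "finite A" and "\<And>a. a \<in> A \<Longrightarrow> 0 \<le> f a"
  shows "q * real (card {a \<in> A. q \<le> f a}) \<le> (\<Sum>a\<in>A. f a)"
proof -
  have "q * real (card {a \<in> A. q \<le> f a}) = (\<Sum>a\<in>{a \<in> A. q \<le> f a}. q)" by simp
  also have "\<dots> \<le> (\<Sum>a\<in>{a \<in> A. q \<le> f a}. f a)" by (rule sum_mono) simp
  also have "\<dots> \<le> (\<Sum>a\<in>A. f a)" using assms by (intro sum_mono2) auto
  finally show ?thesis .
qed

lemma card_successful_targets:
  assumes dec: "decomposable \<Omega> \<phi>" and fin: "finite \<Omega>"
  shows "q * real (card {T \<in> tau \<Omega> k. q \<le> \<phi> T F}) * real (card \<Omega>)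
           \<le> real k * real (card (tau \<Omega> k))"
proof -
  have "q * real (card {T \<in> tau \<Omega> k. q \<le> \<phi> T F}) \<le> (\<Sum>T\<in>tau \<Omega> k. \<phi> T F)"
    using fin dec by (intro card_threshold_le_sum finite_tau) (auto simp: tau_def decomposable_nonneg)
  then have "q * real (card {T \<in> tau \<Omega> k. q \<le> \<phi> T F}) * real (card \<Omega>)
      \<le> real (card \<Omega>) * (\<Sum>T\<in>tau \<Omega> k. \<phi> T F)"
    by (simp add: mult.commute mult_left_mono)
  with decomposable_sum_tau[OF dec fin] show ?thesis by simp
qed

lemma card_pairs_filter:
  assumes "finite A" and "finite B"
  shows "card {(a, b). a \<in> A \<and> b \<in> B \<and> P a b} = (\<Sum>b\<in>B. card {a \<in> A. P a b})"
proof -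
  have "{(a, b). a \<in> A \<and> b \<in> B \<and> P a b} = (\<lambda>(b, a). (a, b)) ` (SIGMA b:B. {a \<in> A. P a b})"
    by (auto simp: image_iff)
  moreover have "inj_on (\<lambda>(b, a). (a, b)) (SIGMA b:B. {a \<in> A. P a b})"
    by (auto simp: inj_on_def)
  ultimately show ?thesis using assms by (simp add: card_image)
qed

lemma card_successful_pairs:
  assumes dec: "decomposable \<Omega> \<phi>" and fin: "finite \<Omega>" and "finite B"
  shows "q * real (card {(T, F). T \<in> tau \<Omega> k \<and> F \<in> B \<and> q \<le> \<phi> T F}) * real (card \<Omega>)
           \<le> real k * real (card (tau \<Omega> k)) * real (card B)"
proof -
  have "q * real (card {(T, F). T \<in> tau \<Omega> k \<and> F \<in> B \<and> q \<le> \<phi> T F}) * real (card \<Omega>)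
      = (\<Sum>F\<in>B. q * real (card {T \<in> tau \<Omega> k. q \<le> \<phi> T F}) * real (card \<Omega>))"
    using fin \<open>finite B\<close>
    by (simp add: card_pairs_filter finite_tau sum_distrib_left sum_distrib_right)
  also have "\<dots> \<le> (\<Sum>F\<in>B. real k * real (card (tau \<Omega> k)))"
    using dec fin by (intro sum_mono card_successful_targets)
  finally show ?thesis by (simp add: mult_ac)
qed

theorem theorem4:
  fixes \<Omega> :: "'a set" and k m :: nat and B :: "bool list set"
    and \<phi> :: "'a set \<Rightarrow> bool list \<Rightarrow> real" and qmin :: real
  assumes "finite \<Omega>" and "\<Omega> \<noteq> {}"
    and "\<forall>F\<in>B. length F \<le> m"
    and "decomposable \<Omega> \<phi>"
    and "0 < qmin" and "qmin \<le> 1"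
  shows "real (card {(T, F). T \<in> tau \<Omega> k \<and> F \<in> B \<and> \<phi> T F \<ge> qmin})
           / real (card {(T, F). T \<in> tau \<Omega> k \<and> F \<in> B})
         \<le> (real k / real (card \<Omega>)) / qmin"
proof -
  let ?N = "real (card (tau \<Omega> k))" and ?n = "real (card \<Omega>)"
  have "finite B"
    using assms(3) by (intro finite_subset[OF _ finite_lists_length_le[of UNIV m]]) auto
  then have successes: "qmin * real (card {(T, F). T \<in> tau \<Omega> k \<and> F \<in> B \<and> \<phi> T F \<ge> qmin}) * ?n
      \<le> real k * (?N * real (card B))"
    using card_successful_pairs assms(1,4) by (simp add: mult_ac)
  have "{(T, F). T \<in> tau \<Omega> k \<and> F \<in> B} = tau \<Omega> k \<times> B" by auto
  then have total: "real (card {(T, F). T \<in> tau \<Omega> k \<and> F \<in> B}) = ?N * real (card B)"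
    by (simp add: card_cartesian_product)
  show ?thesis
  proof (cases "?N * real (card B) = 0")
    case True
    with assms(5) show ?thesis unfolding total True by simp
  next
    case False
    then have "?N * real (card B) > 0" by simp
    moreover have "?n > 0" using assms(1,2) by (simp add: card_gt_0_iff)
    ultimately show ?thesis
      using successes assms(5) unfolding total by (simp add: field_simps)
  qed
qed

end
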